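(* Let $G$ be a coarsely bottlenecked graph and $H$ a graph such that $H$ is not an asymptotic minor of $G$. For any $M\in\mathbb N$ such that $G$ does not contain an $M$-fat $H$ minor, the skeleton $G_{M,M}$ (for any choice of root $x_0\in V(G)$) contains no $3$-fat $H$ minor.
   Context: All graphs are connected (and unbounded); multi-edges are allowed. $d$ denotes the graph metric on vertices. For $M\ge 0$: sets $X,Y$ of vertices are $M$-disjoint if $d(x,y)>M$ for all $x\in X,y\in Y$; a set $X$ is $M$-connected if any two of its points are joined by a finite sequence of points of $X$ with consecutive points at distance $\le M$; $N_M(S)=\{y: d(s,y)<M\text{ for some } s\in S\}$. An $X,Y$ path is a path from a vertex of $X$ to a vertex of $Y$. $G$ is $M$-fat $n$-bottlenecked if for any two connected $M$-disjoint subgraphs $X,Y\subset G$ there is $S\subset V(G)\setminus(V(X)\cup V(Y))$, $|S|=n$, such that every $X,Y$ path meets $N_M(S)$; $G$ is coarsely bottlenecked if this holds for some $M,n\in\mathbb N$. $H$ is an $M$-fat minor of $G$ if there are connected subgraphs $B_v$ ($v\in V(H)$) and paths $P_e$ ($e\in E(H)$), $P_e$ joining $B_u$ to $B_v$ for $e=uv$, such that any two of these sets are $M$-disjoint unless they correspond to an incident vertex–edge pair of $H$; $H$ is an asymptotic minor of $G$ if $G$ has an $M$-fat $H$ minor for all $M$. Skeleton $G_{\lambda,k}$ (root $x_0$, scale $\lambda\ge1$, connectivity $k\ge1$): layers $A_{N,\lambda}=\{x: N\lambda<d(x,x_0)\le(N+1)\lambda\}$, $N\in\mathbb Z$; blocks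 are the maximal $k$-connected subsets of layers; $G_{\lambda,k}$ has a vertex per block and an edge between two blocks iff an edge of $G$ joins them. *)

theory Defs
  imports Complex_Main "HOL-Library.Extended_Nat"
begin

text \<open>A graph G (for the metric, paths and connected subgraphs only the
vertex set and the adjacency relation matter, so parallel edges of G are
irrelevant) is a pair (V, E) of a vertex set and an adjacency relation.\<close>

type_synonym 'a sgraph = "'a set \<times> ('a \<Rightarrow> 'a \<Rightarrow> bool)"

definition verts :: "'a sgraph \<Rightarrow> 'a set" where "verts G = fst G"
definition adj :: "'a sgraph \<Rightarrow> 'a \<Rightarrow> 'a \<Rightarrow> bool" where "adj G = snd G"

definition wf_graph :: "'a sgraph \<Rightarrow> bool" where
  "wf_graph G \<longleftrightarrow> (\<forall>x y. adj G x y \<longrightarrow> x \<in> verts G \<and> y \<in> verts G \<and> adj G y x)"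

definition walk :: "'a sgraph \<Rightarrow> 'a list \<Rightarrow> bool" where
  "walk G p \<longleftrightarrow> p \<noteq> [] \<and> set p \<subseteq> verts G \<and>
     (\<forall>i. Suc i < length p \<longrightarrow> adj G (p ! i) (p ! Suc i))"

definition gpath :: "'a sgraph \<Rightarrow> 'a list \<Rightarrow> bool" where
  "gpath G p \<longleftrightarrow> walk G p \<and> distinct p"

text \<open>Graph metric (infinite if no walk exists).\<close>
definition dist :: "'a sgraph \<Rightarrow> 'a \<Rightarrow> 'a \<Rightarrow> enat" where
  "dist G x y = Inf {enat (length p - 1) | p. walk G p \<and> hd p = x \<and> last p = y}"

definition connected_graph :: "'a sgraph \<Rightarrow> bool" where
  "connected_graph G \<longleftrightarrow> verts G \<noteq> {} \<and>
     (\<forall>x\<in>verts G. \<forall>y\<in>verts G. \<exists>p. walk G p \<and> hd p = x \<and> last p = y)"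

definition unbounded_graph :: "'a sgraph \<Rightarrow> bool" where
  "unbounded_graph G \<longleftrightarrow> (\<forall>n::nat. \<exists>x\<in>verts G. \<exists>y\<in>verts G. dist G x y > enat n)"

definition conn_sub :: "'a sgraph \<Rightarrow> 'a set \<Rightarrow> bool" where
  "conn_sub G X \<longleftrightarrow> X \<noteq> {} \<and> X \<subseteq> verts G \<and>
     (\<forall>x\<in>X. \<forall>y\<in>X. \<exists>p. walk G p \<and> set p \<subseteq> X \<and> hd p = x \<and> last p = y)"

definition M_disjoint :: "'a sgraph \<Rightarrow> nat \<Rightarrow> 'a set \<Rightarrow> 'a set \<Rightarrow> bool" where
  "M_disjoint G M X Y \<longleftrightarrow> (\<forall>x\<in>X. \<forall>y\<in>Y. dist G x y > enat M)"

definition M_connected :: "'a sgraph \<Rightarrow> nat \<Rightarrow> 'a set \<Rightarrow> bool" where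
  "M_connected G M X \<longleftrightarrow> (\<forall>x\<in>X. \<forall>y\<in>X. \<exists>xs. xs \<noteq> [] \<and> set xs \<subseteq> X \<and>
      hd xs = x \<and> last xs = y \<and>
      (\<forall>i. Suc i < length xs \<longrightarrow> dist G (xs ! i) (xs ! Suc i) \<le> enat M))"

definition nbhd :: "'a sgraph \<Rightarrow> nat \<Rightarrow> 'a set \<Rightarrow> 'a set" where
  "nbhd G M S = {y \<in> verts G. \<exists>s\<in>S. dist G s y < enat M}"

definition fat_bottlenecked :: "'a sgraph \<Rightarrow> nat \<Rightarrow> nat \<Rightarrow> bool" where
  "fat_bottlenecked G M n \<longleftrightarrow>
    (\<forall>X Y. conn_sub G X \<and> conn_sub G Y \<and> M_disjoint G M X Y \<longrightarrow>
      (\<exists>S. S \<subseteq> verts G - (X \<union> Y) \<and> finite S \<and> card S = n \<and>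
         (\<forall>p. gpath G p \<and> hd p \<in> X \<and> last p \<in> Y \<longrightarrow> set p \<inter> nbhd G M S \<noteq> {})))"

definition coarsely_bottlenecked :: "'a sgraph \<Rightarrow> bool" where
  "coarsely_bottlenecked G \<longleftrightarrow> (\<exists>M n. fat_bottlenecked G M n)"

text \<open>A multigraph H (multi-edges and loops allowed): vertex set, edge set,
and an endpoint map.\<close>
type_synonym ('v,'e) mgraph = "'v set \<times> 'e set \<times> ('e \<Rightarrow> 'v \<times> 'v)"

definition wf_mgraph :: "('v,'e) mgraph \<Rightarrow> bool" where
  "wf_mgraph H \<longleftrightarrow> (case H of (VH, EH, ends) \<Rightarrow>
      (\<forall>e\<in>EH. fst (ends e) \<in> VH \<and> snd (ends e) \<in> VH))"

definition fat_minor :: "nat \<Rightarrow> ('v,'e) mgraph \<Rightarrow> 'a sgraph \<Rightarrow> bool" where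
  "fat_minor M H G \<longleftrightarrow> (case H of (VH, EH, ends) \<Rightarrow>
     (\<exists>B :: 'v \<Rightarrow> 'a set. \<exists>P :: 'e \<Rightarrow> 'a list.
        (\<forall>v\<in>VH. conn_sub G (B v)) \<and>
        (\<forall>e\<in>EH. gpath G (P e) \<and> hd (P e) \<in> B (fst (ends e)) \<and> last (P e) \<in> B (snd (ends e))) \<and>
        (\<forall>u\<in>VH. \<forall>v\<in>VH. u \<noteq> v \<longrightarrow> M_disjoint G M (B u) (B v)) \<and>
        (\<forall>e\<in>EH. \<forall>f\<in>EH. e \<noteq> f \<longrightarrow> M_disjoint G M (set (P e)) (set (P f))) \<and>
        (\<forall>v\<in>VH. \<forall>e\<in>EH. v \<noteq> fst (ends e) \<and> v \<noteq> snd (ends e) \<longrightarrow>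
            M_disjoint G M (B v) (set (P e)))))"

definition asymptotic_minor :: "('v,'e) mgraph \<Rightarrow> 'a sgraph \<Rightarrow> bool" where
  "asymptotic_minor H G \<longleftrightarrow> (\<forall>M. fat_minor M H G)"

definition layer :: "'a sgraph \<Rightarrow> 'a \<Rightarrow> real \<Rightarrow> int \<Rightarrow> 'a set" where
  "layer G x0 lam N = {x \<in> verts G. \<exists>n::nat. dist G x0 x = enat n \<and>
       real_of_int N * lam < real n \<and> real n \<le> real_of_int (N + 1) * lam}"

definition is_block :: "'a sgraph \<Rightarrow> 'a \<Rightarrow> real \<Rightarrow> nat \<Rightarrow> 'a set \<Rightarrow> bool" where
  "is_block G x0 lam k B \<longleftrightarrow> B \<noteq> {} \<and> (\<exists>N. B \<subseteq> layer G x0 lam N \<and> M_connected G k B \<and>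
      (\<forall>C. B \<subseteq> C \<and> C \<subseteq> layer G x0 lam N \<and> M_connected G k C \<longrightarrow> C = B))"

definition skeleton :: "'a sgraph \<Rightarrow> 'a \<Rightarrow> real \<Rightarrow> nat \<Rightarrow> 'a set sgraph" where
  "skeleton G x0 lam k = ({B. is_block G x0 lam k B},
     \<lambda>B C. is_block G x0 lam k B \<and> is_block G x0 lam k C \<and> B \<noteq> C \<and>
            (\<exists>x\<in>B. \<exists>y\<in>C. adj G x y))"

end

theory Submission
  imports Defs
begin

(* A 3-fat H minor of the skeleton pulls back to an M-fat H minor of G.
   A set S of blocks is lifted to the part of G reachable from the blocks of S inside the
   blocks of S and their skeleton neighbours (the halo of S). Two vertices at distance at
   most M lie in equal or adjacent blocks: a geodesic between them meets at most two
   consecutive layers and crosses from one block to the other along an edge of G. Hence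
   lifts within distance M come from sets of blocks within skeleton distance 1 + 1 + 1 = 3,
   while connected sets and paths of the skeleton lift to connected sets and paths of G. *)

section \<open>Walks and the graph metric\<close>

lemma walk_Cons2: "walk G (x # y # p) \<longleftrightarrow> x \<in> verts G \<and> adj G x y \<and> walk G (y # p)"
proof
  assume "walk G (x # y # p)"
  then show "x \<in> verts G \<and> adj G x y \<and> walk G (y # p)"
    unfolding walk_def by (auto dest: spec[where x="Suc _"] spec[where x=0])
next
  assume a: "x \<in> verts G \<and> adj G x y \<and> walk G (y # p)"
  show "walk G (x # y # p)" unfolding walk_def
  proof (intro conjI allI impI)
    fix i assume "Suc i < length (x # y # p)"
    then show "adj G ((x # y # p) ! i) ((x # y # p) ! Suc i)"
      using a unfolding walk_def by (cases i) auto
  qed (use a in \<open>auto simp: walk_def\<close>)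
qed

lemma walk_single [simp]: "walk G [x] \<longleftrightarrow> x \<in> verts G"
  by (simp add: walk_def)

lemma walk_Cons: "walk G (x # p) \<longleftrightarrow> x \<in> verts G \<and> (p = [] \<or> adj G x (hd p) \<and> walk G p)"
  by (cases p) (auto simp: walk_Cons2)

lemma walk_append:
  "p \<noteq> [] \<Longrightarrow> q \<noteq> [] \<Longrightarrow> walk G (p @ q) \<longleftrightarrow> walk G p \<and> walk G q \<and> adj G (last p) (hd q)"
proof (induction p)
  case (Cons x p)
  then show ?case
    by (cases "p = []") (auto simp: walk_Cons hd_append)
qed simp

lemma walk_split:
  assumes "walk G (xs @ z # ys)"
  shows "walk G (xs @ [z])" and "walk G (z # ys)"
proof -
  show "walk G (xs @ [z])"
  proof (cases "ys = []")
    case False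
    have "walk G ((xs @ [z]) @ ys)" using assms by simp
    then show ?thesis using False walk_append[of "xs @ [z]" ys G] by blast
  qed (use assms in simp)
  show "walk G (z # ys)"
  proof (cases "xs = []")
    case False
    then show ?thesis using assms walk_append[of xs "z # ys" G] by blast
  qed (use assms in simp)
qed

lemma walk_rev: "wf_graph G \<Longrightarrow> walk G p \<Longrightarrow> walk G (rev p)"
proof (induction p)
  case (Cons x p)
  then show ?case
    by (cases "p = []") (auto simp: walk_Cons walk_append last_rev wf_graph_def)
qed simp

lemma walk_imp_gpath:
  "walk G p \<Longrightarrow> \<exists>q. gpath G q \<and> hd q = hd p \<and> last q = last p \<and> set q \<subseteq> set p"
proof (induction p)
  case Nil then show ?case by (simp add: walk_def)
next
  case (Cons x p)
  show ?case
  proof (cases "p = []")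
    case True then show ?thesis using Cons.prems by (intro exI[of _ "[x]"]) (auto simp: gpath_def)
  next
    case False
    with Cons obtain q where q: "gpath G q" "hd q = hd p" "last q = last p" "set q \<subseteq> set p"
      by (auto simp: walk_Cons)
    have "q \<noteq> []" using q(1) by (simp add: gpath_def walk_def)
    show ?thesis
    proof (cases "x \<in> set q")
      case True
      then obtain q1 q2 where qs: "q = q1 @ x # q2" by (meson split_list)
      have "walk G (q1 @ x # q2)" "distinct (x # q2)" using q(1) qs by (auto simp: gpath_def)
      then have "gpath G (x # q2)" by (auto simp: gpath_def dest: walk_split(2))
      then show ?thesis using q False qs by (intro exI[of _ "x # q2"]) auto
    next
      case False
      then have "gpath G (x # q)" using q Cons.prems \<open>q \<noteq> []\<close> \<open>p \<noteq> []\<close>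
        by (auto simp: gpath_def walk_Cons)
      then show ?thesis using q \<open>q \<noteq> []\<close> \<open>p \<noteq> []\<close> by (intro exI[of _ "x # q"]) auto
    qed
  qed
qed

lemma graph_dist_le_walk:
  "walk G p \<Longrightarrow> hd p = x \<Longrightarrow> last p = y \<Longrightarrow> dist G x y \<le> enat (length p - 1)"
  unfolding dist_def by (rule Inf_lower) blast

lemma graph_dist_attained:
  assumes "\<exists>p. walk G p \<and> hd p = x \<and> last p = y"
  shows "\<exists>p. walk G p \<and> hd p = x \<and> last p = y \<and> dist G x y = enat (length p - 1)"
proof -
  let ?A = "{enat (length p - 1) | p. walk G p \<and> hd p = x \<and> last p = y}"
  from assms obtain p where "walk G p \<and> hd p = x \<and> last p = y" by blast
  then have "enat (length p - 1) \<in> ?A" by blast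
  then have "Inf ?A \<in> ?A" by (rule wellorder_InfI)
  then show ?thesis unfolding dist_def by blast
qed

lemma graph_dist_enat_attained:
  assumes "dist G x y = enat n"
  shows "\<exists>p. walk G p \<and> hd p = x \<and> last p = y \<and> dist G x y = enat (length p - 1)"
proof (rule graph_dist_attained, rule ccontr)
  assume "\<nexists>p. walk G p \<and> hd p = x \<and> last p = y"
  then have "{enat (length p - 1) | p. walk G p \<and> hd p = x \<and> last p = y} = {}" by blast
  then show False using assms unfolding dist_def by (simp add: Inf_enat_def)
qed

lemma graph_dist_triangle: "dist G x z \<le> dist G x y + dist G y z"
proof (cases "dist G x y = \<infinity> \<or> dist G y z = \<infinity>")
  case False
  then obtain n m where "dist G x y = enat n" "dist G y z = enat m" by auto
  then obtain p q where
    p: "walk G p" "hd p = x" "last p = y" "dist G x y = enat (length p - 1)" and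
    q: "walk G q" "hd q = y" "last q = z" "dist G y z = enat (length q - 1)"
    using graph_dist_enat_attained by metis
  have "p \<noteq> []" "q \<noteq> []" using p(1) q(1) by (auto simp: walk_def)
  show ?thesis
  proof (cases "tl q = []")
    case True
    then have "z = y" using q \<open>q \<noteq> []\<close> by (cases q) auto
    then show ?thesis by simp
  next
    case False
    then obtain q' where q': "q = y # q'" "q' \<noteq> []" using q \<open>q \<noteq> []\<close> by (cases q) auto
    have "walk G (p @ q')" using p q q' \<open>p \<noteq> []\<close> by (auto simp: walk_append walk_Cons)
    moreover have "hd (p @ q') = x" "last (p @ q') = z" using p q q' \<open>p \<noteq> []\<close> by auto
    ultimately have "dist G x z \<le> enat (length (p @ q') - 1)" by (rule graph_dist_le_walk)
    also have "\<dots> = dist G x y + dist G y z" using p q q' \<open>p \<noteq> []\<close> by (cases p) auto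
    finally show ?thesis .
  qed
qed auto

lemma graph_dist_sym:
  assumes "wf_graph G" shows "dist G x y = dist G y x"
proof -
  have "dist G y x \<le> dist G x y" for x y
  proof (cases "dist G x y")
    case (enat n)
    then obtain p where p: "walk G p" "hd p = x" "last p = y" "dist G x y = enat (length p - 1)"
      using graph_dist_enat_attained by metis
    have "dist G y x \<le> enat (length (rev p) - 1)"
      using p walk_rev[OF assms p(1)] by (intro graph_dist_le_walk) (auto simp: hd_rev last_rev)
    then show ?thesis using p by simp
  qed simp
  then show ?thesis by (simp add: antisym)
qed

lemma graph_dist_refl: "x \<in> verts G \<Longrightarrow> dist G x x = 0"
  using graph_dist_le_walk[of G "[x]" x x] by (simp add: walk_def zero_enat_def[symmetric])

lemma graph_dist_adj_le_1: "x \<in> verts G \<Longrightarrow> y \<in> verts G \<Longrightarrow> adj G x y \<Longrightarrow> dist G x y \<le> 1"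
  using graph_dist_le_walk[of G "[x,y]" x y] by (simp add: walk_Cons2 one_enat_def)

lemma graph_dist_along_walk:
  assumes "walk G p" "z \<in> set p"
  shows "dist G (hd p) z \<le> enat (length p - 1)" and "dist G z (last p) \<le> enat (length p - 1)"
proof -
  obtain xs ys where p: "p = xs @ z # ys" using assms(2) by (meson split_list)
  have "dist G (hd p) z \<le> enat (length (xs @ [z]) - 1)"
    using walk_split(1)[of G xs z ys] assms(1) p
      by (intro graph_dist_le_walk) (auto simp: hd_append)
  then show "dist G (hd p) z \<le> enat (length p - 1)" using p by (simp add: order_trans)
  have "dist G z (last p) \<le> enat (length (z # ys) - 1)"
    using walk_split(2)[of G xs z ys] assms(1) p by (intro graph_dist_le_walk) auto
  then show "dist G z (last p) \<le> enat (length p - 1)" using p by (simp add: order_trans)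
qed

lemma M_disjoint_mono:
  "M_disjoint G M X Y \<Longrightarrow> X' \<subseteq> X \<Longrightarrow> Y' \<subseteq> Y \<Longrightarrow> M_disjoint G M X' Y'"
  by (auto simp: M_disjoint_def)

lemma walk_exits_set:
  assumes "walk G p" "hd p \<in> A" "last p \<notin> A"
  shows "\<exists>i. Suc i < length p \<and> p ! i \<in> A \<and> p ! Suc i \<notin> A"
  using assms
proof (induction p)
  case (Cons x p)
  then have "p \<noteq> []" by auto
  show ?case
  proof (cases "hd p \<in> A")
    case True
    then obtain i where "Suc i < length p" "p ! i \<in> A" "p ! Suc i \<notin> A"
      using Cons \<open>p \<noteq> []\<close> by (auto simp: walk_Cons)
    then show ?thesis by (intro exI[of _ "Suc i"]) simp
  next
    case False
    then show ?thesis using Cons.prems(2) \<open>p \<noteq> []\<close> by (intro exI[of _ 0]) (auto simp: hd_conv_nth)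
  qed
qed (simp add: walk_def)

section \<open>Reachability inside a vertex set\<close>

definition induced_edges :: "'a sgraph \<Rightarrow> 'a set \<Rightarrow> ('a \<times> 'a) set" where
  "induced_edges G X = {(a, b). a \<in> X \<and> a \<in> verts G \<and> b \<in> X \<and> b \<in> verts G \<and> adj G a b}"

lemma walk_induced_rtrancl:
  "walk G p \<Longrightarrow> set p \<subseteq> X \<Longrightarrow> (hd p, last p) \<in> (induced_edges G X)\<^sup>*"
proof (induction p)
  case (Cons x p)
  show ?case
  proof (cases "p = []")
    case False
    then have "(x, hd p) \<in> induced_edges G X"
      using Cons.prems walk_Cons[of G x p] by (auto simp: walk_def induced_edges_def)
    moreover have "(hd p, last p) \<in> (induced_edges G X)\<^sup>*"
      using Cons False by (auto simp: walk_Cons)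
    ultimately show ?thesis using False by (simp add: converse_rtrancl_into_rtrancl)
  qed simp
qed (simp add: walk_def)

lemma induced_rtrancl_walk:
  assumes "(u, w) \<in> (induced_edges G X)\<^sup>*" "u \<in> verts G"
  shows "\<exists>p. walk G p \<and> hd p = u \<and> last p = w \<and> set p \<subseteq> {y. (u, y) \<in> (induced_edges G X)\<^sup>*}"
  using assms
proof (induction rule: converse_rtrancl_induct)
  case base then show ?case by (intro exI[of _ "[w]"]) auto
next
  case (step u y)
  then have "y \<in> verts G" by (auto simp: induced_edges_def)
  with step obtain p where
    p: "walk G p" "hd p = y" "last p = w" "set p \<subseteq> {z. (y, z) \<in> (induced_edges G X)\<^sup>*}"
    by blast
  have "p \<noteq> []" using p(1) by (simp add: walk_def)
  have "walk G (u # p)" using p step \<open>p \<noteq> []\<close> by (auto simp: walk_Cons induced_edges_def)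
  moreover have "set (u # p) \<subseteq> {z. (u, z) \<in> (induced_edges G X)\<^sup>*}"
    using p(4) step.hyps(1) by (auto intro: converse_rtrancl_into_rtrancl)
  ultimately show ?case using p \<open>p \<noteq> []\<close> by (intro exI[of _ "u # p"]) auto
qed

lemma induced_rtrancl_sym:
  assumes "\<And>a b. adj G a b \<Longrightarrow> adj G b a" "(a, b) \<in> (induced_edges G X)\<^sup>*"
  shows "(b, a) \<in> (induced_edges G X)\<^sup>*"
  using assms(2)
proof (induction rule: rtrancl_induct)
  case (step y z)
  then have "(z, y) \<in> induced_edges G X" using assms(1) by (auto simp: induced_edges_def)
  then show ?case using step.IH by (rule converse_rtrancl_into_rtrancl)
qed simp

lemma induced_rtrancl_mem: "(a, b) \<in> (induced_edges G X)\<^sup>* \<Longrightarrow> a \<in> X \<Longrightarrow> b \<in> X"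
  by (induction rule: rtrancl_induct) (auto simp: induced_edges_def)

lemma induced_rtrancl_restrict:
  "(a, b) \<in> (induced_edges G X)\<^sup>* \<Longrightarrow>
   (a, b) \<in> (induced_edges G {c. (a, c) \<in> (induced_edges G X)\<^sup>*})\<^sup>*"
proof (induction rule: rtrancl_induct)
  case (step y z)
  then have "(y, z) \<in> induced_edges G {c. (a, c) \<in> (induced_edges G X)\<^sup>*}"
    by (auto simp: induced_edges_def intro: rtrancl_into_rtrancl)
  with step.IH show ?case by (rule rtrancl_into_rtrancl)
qed simp

lemma induced_rtrancl_mono:
  assumes "X \<subseteq> Y" "(a, b) \<in> (induced_edges G X)\<^sup>*"
  shows "(a, b) \<in> (induced_edges G Y)\<^sup>*"
proof -
  have "induced_edges G X \<subseteq> induced_edges G Y" using assms(1) by (auto simp: induced_edges_def)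
  then show ?thesis using assms(2) rtrancl_mono by blast
qed

section \<open>Layers and blocks\<close>

locale rooted_graph =
  fixes G :: "'a sgraph" and x0 :: 'a and M :: nat
  assumes wf: "wf_graph G" and connected: "connected_graph G"
    and M_pos: "M \<ge> 1" and root: "x0 \<in> verts G"
begin

lemma adj_sym: "adj G a b \<Longrightarrow> adj G b a"
  using wf by (auto simp: wf_graph_def)

lemma geodesic_exists:
  "x \<in> verts G \<Longrightarrow> y \<in> verts G \<Longrightarrow>
   \<exists>p. walk G p \<and> hd p = x \<and> last p = y \<and> dist G x y = enat (length p - 1)"
  using connected unfolding connected_graph_def by (intro graph_dist_attained) blast

definition root_dist :: "'a \<Rightarrow> nat" where
  "root_dist z = the_enat (dist G x0 z)"

lemma dist_root_eq: "z \<in> verts G \<Longrightarrow> dist G x0 z = enat (root_dist z)"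
  using geodesic_exists[OF root, of z] unfolding root_dist_def by auto

definition layer_index :: "'a \<Rightarrow> int" where
  "layer_index z = \<lceil>real (root_dist z) / real M\<rceil> - 1"

abbreviation lay :: "int \<Rightarrow> 'a set" where
  "lay N \<equiv> layer G x0 (real M) N"

lemma layer_eq: "lay N = {z \<in> verts G. layer_index z = N}"
proof -
  have "(real_of_int N * real M < real n \<and> real n \<le> real_of_int (N + 1) * real M)
      \<longleftrightarrow> \<lceil>real n / real M\<rceil> - 1 = N" for n :: nat
  proof -
    have "\<lceil>real n / real M\<rceil> - 1 = N \<longleftrightarrow> \<lceil>real n / real M\<rceil> = N + 1"
      by auto
    also have "\<dots> \<longleftrightarrow> real_of_int N < real n / real M \<and> real n / real M \<le> real_of_int (N + 1)"
      by (simp add: ceiling_eq_iff)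
    also have "\<dots> \<longleftrightarrow> real_of_int N * real M < real n \<and> real n \<le> real_of_int (N + 1) * real M"
      using M_pos by (simp add: pos_less_divide_eq pos_divide_le_eq)
    finally show ?thesis by simp
  qed
  then show ?thesis unfolding layer_def layer_index_def using dist_root_eq by auto
qed

lemma layer_index_le:
  assumes "x \<in> verts G" "y \<in> verts G" "dist G x y \<le> enat M"
  shows "layer_index y \<le> layer_index x + 1"
proof -
  have "enat (root_dist y) \<le> enat (root_dist x) + dist G x y"
    using graph_dist_triangle[of G x0 y x] dist_root_eq assms(1,2) by simp
  also have "\<dots> \<le> enat (root_dist x + M)"
    using add_left_mono[OF assms(3), of "enat (root_dist x)"] by simp
  finally have "real (root_dist y) \<le> real (root_dist x) + real M" by simp
  then have "real (root_dist y) / real M \<le> real (root_dist x) / real M + 1"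
    using M_pos by (simp add: divide_le_eq add_divide_distrib distrib_right)
  then show ?thesis unfolding layer_index_def
    by (metis ceiling_mono ceiling_add_one add_le_cancel_right diff_add_cancel)
qed

lemma abs_layer_index_diff_le:
  assumes "x \<in> verts G" "y \<in> verts G" "dist G x y \<le> enat M"
  shows "\<bar>layer_index x - layer_index y\<bar> \<le> 1"
  using layer_index_le[OF assms] layer_index_le[OF assms(2,1)] assms(3) graph_dist_sym[OF wf, of x y]
  by simp

definition proximity_graph :: "'a sgraph" where
  "proximity_graph = (verts G, \<lambda>a b. dist G a b \<le> enat M)"

lemma proximity_graph_verts [simp]: "verts proximity_graph = verts G"
  by (simp add: proximity_graph_def verts_def)

lemma proximity_graph_adj [simp]: "adj proximity_graph a b \<longleftrightarrow> dist G a b \<le> enat M"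
  by (simp add: proximity_graph_def adj_def)

lemma M_connected_iff_rtrancl:
  assumes "C \<subseteq> verts G"
  shows "M_connected G M C \<longleftrightarrow> (\<forall>x\<in>C. \<forall>y\<in>C. (x, y) \<in> (induced_edges proximity_graph C)\<^sup>*)"
proof
  assume "M_connected G M C"
  show "\<forall>x\<in>C. \<forall>y\<in>C. (x, y) \<in> (induced_edges proximity_graph C)\<^sup>*"
  proof (intro ballI)
    fix x y assume "x \<in> C" "y \<in> C"
    then obtain xs where xs: "xs \<noteq> []" "set xs \<subseteq> C" "hd xs = x" "last xs = y"
      "\<forall>i. Suc i < length xs \<longrightarrow> dist G (xs ! i) (xs ! Suc i) \<le> enat M"
      using \<open>M_connected G M C\<close> unfolding M_connected_def by (meson \<open>x \<in> C\<close> \<open>y \<in> C\<close>)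
    then have "walk proximity_graph xs" using assms by (auto simp: walk_def)
    from walk_induced_rtrancl[OF this xs(2)] show "(x, y) \<in> (induced_edges proximity_graph C)\<^sup>*"
      using xs by simp
  qed
next
  assume reach: "\<forall>x\<in>C. \<forall>y\<in>C. (x, y) \<in> (induced_edges proximity_graph C)\<^sup>*"
  show "M_connected G M C" unfolding M_connected_def
  proof (intro ballI)
    fix x y assume "x \<in> C" "y \<in> C"
    then obtain p where p: "walk proximity_graph p" "hd p = x" "last p = y"
      "set p \<subseteq> {z. (x, z) \<in> (induced_edges proximity_graph C)\<^sup>*}"
      using induced_rtrancl_walk[of x y proximity_graph C] reach assms \<open>x \<in> C\<close> \<open>y \<in> C\<close> by auto
    have "set p \<subseteq> C" using p(4) induced_rtrancl_mem[of x _ proximity_graph C] \<open>x \<in> C\<close> by blast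
    then show "\<exists>xs. xs \<noteq> [] \<and> set xs \<subseteq> C \<and> hd xs = x \<and> last xs = y \<and>
        (\<forall>i. Suc i < length xs \<longrightarrow> dist G (xs ! i) (xs ! Suc i) \<le> enat M)"
      using p unfolding walk_def by (intro exI[of _ p]) simp
  qed
qed

definition block_of :: "'a \<Rightarrow> 'a set" where
  "block_of z = {y. (z, y) \<in> (induced_edges proximity_graph (lay (layer_index z)))\<^sup>*}"

abbreviation is_blk :: "'a set \<Rightarrow> bool" where
  "is_blk B \<equiv> is_block G x0 (real M) M B"

lemma block_of_self: "z \<in> block_of z"
  by (simp add: block_of_def)

lemma block_of_subset_layer: "z \<in> verts G \<Longrightarrow> block_of z \<subseteq> lay (layer_index z)"
  using induced_rtrancl_mem[of z _ proximity_graph] by (auto simp: block_of_def layer_eq)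

lemma block_of_mem_layer_index:
  "z \<in> verts G \<Longrightarrow> y \<in> block_of z \<Longrightarrow> y \<in> verts G \<and> layer_index y = layer_index z"
  using block_of_subset_layer by (auto simp: layer_eq)

lemma M_connected_block_of:
  assumes "z \<in> verts G" shows "M_connected G M (block_of z)"
proof -
  have V: "block_of z \<subseteq> verts G" using block_of_mem_layer_index[OF assms] by blast
  have sym: "adj proximity_graph a b \<Longrightarrow> adj proximity_graph b a" for a b
    using graph_dist_sym[OF wf] by simp
  have reach: "(z, y) \<in> (induced_edges proximity_graph (block_of z))\<^sup>*" if "y \<in> block_of z" for y
    using induced_rtrancl_restrict[of z y] that by (simp add: block_of_def)
  show ?thesis
  proof (subst M_connected_iff_rtrancl[OF V], intro ballI)
    fix x y assume "x \<in> block_of z" "y \<in> block_of z"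
    have "(x, z) \<in> (induced_edges proximity_graph (block_of z))\<^sup>*"
      using induced_rtrancl_sym[OF sym reach[OF \<open>x \<in> block_of z\<close>]] .
    then show "(x, y) \<in> (induced_edges proximity_graph (block_of z))\<^sup>*"
      using reach[OF \<open>y \<in> block_of z\<close>] by (rule rtrancl_trans)
  qed
qed

lemma is_block_block_of:
  assumes "z \<in> verts G" shows "is_blk (block_of z)"
proof -
  have maximal: "C = block_of z"
    if C: "block_of z \<subseteq> C" "C \<subseteq> lay (layer_index z)" "M_connected G M C" for C
  proof
    have "C \<subseteq> verts G" using C(2) by (auto simp: layer_eq)
    show "C \<subseteq> block_of z"
    proof
      fix c assume "c \<in> C"
      then have "(z, c) \<in> (induced_edges proximity_graph C)\<^sup>*"
        using C block_of_self[of z] M_connected_iff_rtrancl[OF \<open>C \<subseteq> verts G\<close>] by blast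
      then show "c \<in> block_of z"
        using induced_rtrancl_mono[OF C(2)] by (simp add: block_of_def)
    qed
  qed (use C in auto)
  show ?thesis unfolding is_block_def
  proof (intro conjI exI[of _ "layer_index z"] allI impI)
    show "block_of z \<noteq> {}" using block_of_self by blast
  qed (use block_of_subset_layer[OF assms] maximal M_connected_block_of[OF assms] in auto)
qed

lemma is_block_subset_verts: "is_blk B \<Longrightarrow> B \<subseteq> verts G"
  by (auto simp: is_block_def layer_def)

lemma is_block_eq_block_of:
  assumes "is_blk B" "z \<in> B" shows "B = block_of z"
proof -
  obtain N where N: "B \<subseteq> lay N" "M_connected G M B"
    "\<And>C. B \<subseteq> C \<and> C \<subseteq> lay N \<and> M_connected G M C \<Longrightarrow> C = B"
    using assms(1) unfolding is_block_def by blast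
  have "z \<in> verts G" and N_eq: "N = layer_index z" using N(1) assms(2) by (auto simp: layer_eq)
  have "B \<subseteq> verts G" using N(1) by (auto simp: layer_eq)
  have "B \<subseteq> block_of z"
  proof
    fix b assume "b \<in> B"
    then have "(z, b) \<in> (induced_edges proximity_graph B)\<^sup>*"
      using N(2) assms(2) M_connected_iff_rtrancl[OF \<open>B \<subseteq> verts G\<close>] by blast
    then show "b \<in> block_of z" using induced_rtrancl_mono[OF N(1)] N_eq by (simp add: block_of_def)
  qed
  moreover have "block_of z \<subseteq> lay N" using block_of_subset_layer[OF \<open>z \<in> verts G\<close>] N_eq by simp
  ultimately show ?thesis using N(3) M_connected_block_of[OF \<open>z \<in> verts G\<close>] by blast
qed

lemma block_of_eq:
  assumes "y \<in> verts G" "z \<in> verts G" "layer_index y = layer_index z" "dist G y z \<le> enat M"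
  shows "block_of y = block_of z"
proof -
  have "(y, z) \<in> induced_edges proximity_graph (lay (layer_index y))"
    using assms by (auto simp: induced_edges_def layer_eq)
  then have "z \<in> block_of y" by (auto simp: block_of_def)
  then show ?thesis using is_block_eq_block_of[OF is_block_block_of[OF assms(1)]] by blast
qed

section \<open>The skeleton\<close>

abbreviation Sk :: "'a set sgraph" where
  "Sk \<equiv> skeleton G x0 (real M) M"

lemma skeleton_verts: "verts Sk = {B. is_blk B}"
  by (simp add: skeleton_def verts_def)

lemma skeleton_adj:
  "adj Sk B C \<longleftrightarrow> is_blk B \<and> is_blk C \<and> B \<noteq> C \<and> (\<exists>x\<in>B. \<exists>y\<in>C. adj G x y)"
  by (simp add: skeleton_def adj_def)

lemma wf_skeleton: "wf_graph Sk"
  using adj_sym by (auto simp: wf_graph_def skeleton_adj skeleton_verts)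

lemma short_walk_blocks:
  assumes p: "walk G p" "length p - 1 \<le> M" and layers: "layer_index (hd p) \<noteq> layer_index (last p)"
    and z: "z \<in> set p"
  shows "block_of z = block_of (hd p) \<or> block_of z = block_of (last p)"
proof -
  have "p \<noteq> []" using p(1) by (simp add: walk_def)
  then have ends: "hd p \<in> verts G" "last p \<in> verts G" "z \<in> verts G"
    using p(1) z by (auto simp: walk_def)
  have "dist G (hd p) z \<le> enat M" "dist G z (last p) \<le> enat M" "dist G (hd p) (last p) \<le> enat M"
    using graph_dist_along_walk[OF p(1) z] graph_dist_along_walk(1)[OF p(1) last_in_set[OF \<open>p \<noteq> []\<close>]]
      p(2) order_trans by (metis enat_ord_simps(1))+
  moreover from this have "dist G z (hd p) \<le> enat M" using graph_dist_sym[OF wf] by metis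
  ultimately show ?thesis
    using abs_layer_index_diff_le ends layers block_of_eq[OF ends(3,1)] block_of_eq[OF ends(3,2)]
    by (smt (verit))
qed

lemma close_vertices_in_adjacent_blocks:
  assumes u: "u \<in> verts G" and w: "w \<in> verts G" and uw: "dist G u w \<le> enat M"
  shows "block_of u = block_of w \<or> adj Sk (block_of u) (block_of w)"
proof (cases "layer_index u = layer_index w")
  case True
  then show ?thesis using block_of_eq u w uw by blast
next
  case False
  then have "block_of u \<noteq> block_of w"
    using block_of_mem_layer_index[OF u] block_of_self[of w] by metis
  obtain p where p: "walk G p" "hd p = u" "last p = w" "dist G u w = enat (length p - 1)"
    using geodesic_exists[OF u w] by blast
  have "w \<notin> block_of u"
    using \<open>block_of u \<noteq> block_of w\<close> is_block_eq_block_of[OF is_block_block_of[OF u]] by blast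
  then obtain i where i: "Suc i < length p" "p ! i \<in> block_of u" "p ! Suc i \<notin> block_of u"
    using walk_exits_set[OF p(1)] p(2,3) block_of_self[of u] by blast
  have "length p - 1 \<le> M" using p(4) uw by simp
  then have "block_of (p ! Suc i) = block_of w"
    using short_walk_blocks[OF p(1)] i(1,3) p(2,3) False block_of_self[of "p ! Suc i"] by force
  then have "p ! Suc i \<in> block_of w" using block_of_self by metis
  moreover have "adj G (p ! i) (p ! Suc i)" using p(1) i by (auto simp: walk_def)
  ultimately show ?thesis
    using i(2) \<open>block_of u \<noteq> block_of w\<close> is_block_block_of[OF u] is_block_block_of[OF w]
    by (auto simp: skeleton_adj)
qed

section \<open>Lifting sets of blocks to subgraphs of G\<close>

definition halo :: "'a set set \<Rightarrow> 'a set" where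
  "halo S = {z \<in> verts G. \<exists>b\<in>S. block_of z = b \<or> adj Sk b (block_of z)}"

definition lift :: "'a set set \<Rightarrow> 'a set" where
  "lift S = {z. \<exists>a\<in>verts G. block_of a \<in> S \<and> (a, z) \<in> (induced_edges G (halo S))\<^sup>*}"

lemma lift_subset_halo: "lift S \<subseteq> halo S"
proof
  fix z assume "z \<in> lift S"
  then obtain a where a: "a \<in> verts G" "block_of a \<in> S" "(a, z) \<in> (induced_edges G (halo S))\<^sup>*"
    by (auto simp: lift_def)
  then have "a \<in> halo S" by (auto simp: halo_def)
  then show "z \<in> halo S" using induced_rtrancl_mem[OF a(3)] by blast
qed

lemma lift_subset_verts: "lift S \<subseteq> verts G"
  using lift_subset_halo by (auto simp: halo_def)

lemma block_subset_lift: "is_blk b \<Longrightarrow> b \<in> S \<Longrightarrow> b \<subseteq> lift S"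
  using is_block_eq_block_of[of b] is_block_subset_verts[of b] by (auto simp: lift_def)

text \<open>A geodesic of length at most M between two vertices of a block may leave the block,
  but it stays in the block and its neighbours; this is why the halo is needed.\<close>

lemma block_rtrancl_halo:
  assumes b: "b \<in> S" "is_blk b" and a: "a \<in> b" "a' \<in> b"
  shows "(a, a') \<in> (induced_edges G (halo S))\<^sup>*"
proof -
  have b_eq: "b = block_of a" using is_block_eq_block_of[OF b(2) a(1)] .
  have "a \<in> verts G" using is_block_subset_verts[OF b(2)] a by blast
  have "(a, a') \<in> (induced_edges proximity_graph (lay (layer_index a)))\<^sup>*"
    using a(2) b_eq by (simp add: block_of_def)
  then show ?thesis
  proof (induction rule: rtrancl_induct)
    case (step y y')
    have "y \<in> block_of a" using step.hyps(1) by (simp add: block_of_def)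
    then have y_b: "block_of y = b"
      using is_block_eq_block_of[OF is_block_block_of[OF \<open>a \<in> verts G\<close>]] b_eq by simp
    have y: "y \<in> verts G" "y' \<in> verts G" and yy': "dist G y y' \<le> enat M"
      using step.hyps(2) by (auto simp: induced_edges_def)
    obtain p where p: "walk G p" "hd p = y" "last p = y'" "dist G y y' = enat (length p - 1)"
      using geodesic_exists[OF y] by blast
    have "set p \<subseteq> halo S"
    proof
      fix z assume "z \<in> set p"
      then have z: "z \<in> verts G" using p(1) by (auto simp: walk_def)
      have "dist G y z \<le> enat (length p - 1)"
        using graph_dist_along_walk(1)[OF p(1) \<open>z \<in> set p\<close>] p(2) by simp
      also have "\<dots> \<le> enat M" using p(4) yy' by simp
      finally have "block_of y = block_of z \<or> adj Sk (block_of y) (block_of z)"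
        using close_vertices_in_adjacent_blocks y(1) z by blast
      then show "z \<in> halo S" using z y_b b(1) unfolding halo_def by auto
    qed
    then have "(y, y') \<in> (induced_edges G (halo S))\<^sup>*" using walk_induced_rtrancl[OF p(1)] p by simp
    then show ?case using step.IH by (rule rtrancl_trans[rotated])
  qed simp
qed

lemma skeleton_rtrancl_imp_rtrancl_halo:
  assumes "(b0, c) \<in> (induced_edges Sk S)\<^sup>*" "b0 \<in> S" "is_blk b0"
  shows "\<forall>a\<in>b0. \<forall>a'\<in>c. (a, a') \<in> (induced_edges G (halo S))\<^sup>*"
  using assms(1)
proof (induction rule: rtrancl_induct)
  case base then show ?case using block_rtrancl_halo assms(2,3) by blast
next
  case (step c c')
  have c: "c \<in> S" "is_blk c" "c' \<in> S" "is_blk c'" "adj Sk c c'"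
    using step.hyps(2) by (auto simp: induced_edges_def skeleton_verts)
  then obtain x y where xy: "x \<in> c" "y \<in> c'" "adj G x y" by (auto simp: skeleton_adj)
  have "x \<in> verts G" "y \<in> verts G" using xy c is_block_subset_verts by blast+
  moreover have "x \<in> halo S" "y \<in> halo S"
    using calculation is_block_eq_block_of[OF c(2) xy(1)] is_block_eq_block_of[OF c(4) xy(2)] c(1,3)
    by (auto simp: halo_def)
  ultimately have xy_edge: "(x, y) \<in> induced_edges G (halo S)"
    using xy by (auto simp: induced_edges_def)
  show ?case
  proof (intro ballI)
    fix a a' assume "a \<in> b0" "a' \<in> c'"
    have "(a, x) \<in> (induced_edges G (halo S))\<^sup>*" using step.IH \<open>a \<in> b0\<close> xy(1) by blast
    then have "(a, y) \<in> (induced_edges G (halo S))\<^sup>*" using xy_edge by (rule rtrancl_into_rtrancl)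
    then show "(a, a') \<in> (induced_edges G (halo S))\<^sup>*"
      using block_rtrancl_halo[OF c(3,4) xy(2) \<open>a' \<in> c'\<close>] by (rule rtrancl_trans)
  qed
qed

lemma conn_sub_lift:
  assumes "conn_sub Sk S" shows "conn_sub G (lift S)"
proof -
  from assms have S: "S \<noteq> {}" "S \<subseteq> {B. is_blk B}"
    and S_conn: "\<forall>x\<in>S. \<forall>y\<in>S. \<exists>p. walk Sk p \<and> set p \<subseteq> S \<and> hd p = x \<and> last p = y"
    unfolding conn_sub_def skeleton_verts by blast+
  obtain b where "b \<in> S" using S(1) by blast
  then have "b \<noteq> {}" using S(2) by (auto simp: is_block_def)
  then obtain a where "a \<in> b" by blast
  then have "lift S \<noteq> {}" using block_subset_lift[of b S] \<open>b \<in> S\<close> S(2) by blast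
  moreover have "\<exists>p. walk G p \<and> set p \<subseteq> lift S \<and> hd p = z \<and> last p = z'"
    if z: "z \<in> lift S" "z' \<in> lift S" for z z'
  proof -
    let ?R = "(induced_edges G (halo S))\<^sup>*"
    obtain a where a: "a \<in> verts G" "block_of a \<in> S" "(a, z) \<in> ?R"
      using z(1) by (auto simp: lift_def)
    obtain a' where a': "a' \<in> verts G" "block_of a' \<in> S" "(a', z') \<in> ?R"
      using z(2) by (auto simp: lift_def)
    obtain q where q: "walk Sk q" "set q \<subseteq> S" "hd q = block_of a" "last q = block_of a'"
      using S_conn[rule_format, OF a(2) a'(2)] by blast
    have "(block_of a, block_of a') \<in> (induced_edges Sk S)\<^sup>*"
      using walk_induced_rtrancl[OF q(1,2)] q by simp
    then have "(a, a') \<in> ?R"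
      using skeleton_rtrancl_imp_rtrancl_halo[OF _ a(2) is_block_block_of[OF a(1)]]
        block_of_self[of a] block_of_self[of a'] by blast
    moreover have "(z, a) \<in> ?R" using induced_rtrancl_sym[of G, OF adj_sym a(3)] .
    ultimately have "(z, z') \<in> ?R" using a'(3) by (blast intro: rtrancl_trans)
    then obtain p where p: "walk G p" "hd p = z" "last p = z'" "set p \<subseteq> {y. (z, y) \<in> ?R}"
      using induced_rtrancl_walk[OF _ subsetD[OF lift_subset_verts z(1)]] by blast
    have "set p \<subseteq> lift S"
    proof
      fix y assume "y \<in> set p"
      then have "(a, y) \<in> ?R" using p(4) a(3) by (blast intro: rtrancl_trans)
      then show "y \<in> lift S" using a(1,2) unfolding lift_def by blast
    qed
    then show ?thesis using p by blast
  qed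
  ultimately show ?thesis using lift_subset_verts unfolding conn_sub_def by blast
qed

lemma gpath_lift:
  assumes "gpath Sk q" "hd q \<in> S" "last q \<in> T"
  shows "\<exists>p. gpath G p \<and> hd p \<in> lift S \<and> last p \<in> lift T \<and> set p \<subseteq> lift (set q)"
proof -
  let ?R = "(induced_edges G (halo (set q)))\<^sup>*"
  have q: "walk Sk q" "q \<noteq> []" "set q \<subseteq> {B. is_blk B}"
    using assms(1) by (auto simp: gpath_def walk_def skeleton_verts)
  have ends: "hd q \<in> set q" "last q \<in> set q" using q(2) by simp_all
  then have ends_blk: "is_blk (hd q)" "is_blk (last q)" using q(3) by blast+
  have "hd q \<noteq> {}" "last q \<noteq> {}" using ends_blk by (auto simp: is_block_def)
  then obtain a a' where a: "a \<in> hd q" "a' \<in> last q" by blast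
  have "(hd q, last q) \<in> (induced_edges Sk (set q))\<^sup>*" using walk_induced_rtrancl[OF q(1)] by simp
  then have "(a, a') \<in> ?R"
    using skeleton_rtrancl_imp_rtrancl_halo[OF _ ends(1) ends_blk(1)] a by blast
  moreover have "a \<in> verts G" using a is_block_subset_verts[OF ends_blk(1)] by blast
  ultimately obtain p where p: "walk G p" "hd p = a" "last p = a'" "set p \<subseteq> {y. (a, y) \<in> ?R}"
    using induced_rtrancl_walk[of a a' G] by blast
  have "set p \<subseteq> lift (set q)"
    using p(4) \<open>a \<in> verts G\<close> is_block_eq_block_of[OF ends_blk(1) a(1)] ends(1) unfolding lift_def by auto
  then obtain p' where "gpath G p'" "hd p' = a" "last p' = a'" "set p' \<subseteq> lift (set q)"
    using walk_imp_gpath[OF p(1)] p(2,3) by (blast intro: order_trans)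
  moreover have "a \<in> lift S" "a' \<in> lift T"
    using block_subset_lift ends_blk assms(2,3) a by blast+
  ultimately show ?thesis by blast
qed

lemma halo_near: "z \<in> halo S \<Longrightarrow> \<exists>b\<in>S. dist Sk b (block_of z) \<le> 1"
proof -
  assume "z \<in> halo S"
  then obtain b where b: "b \<in> S" "block_of z = b \<or> adj Sk b (block_of z)" and "z \<in> verts G"
    by (auto simp: halo_def)
  have z_vert: "block_of z \<in> verts Sk"
    using is_block_block_of[OF \<open>z \<in> verts G\<close>] by (simp add: skeleton_verts)
  show ?thesis
  proof (cases "block_of z = b")
    case True then show ?thesis using b(1) graph_dist_refl[OF z_vert] by (intro bexI[of _ b]) auto
  next
    case False
    then have "adj Sk b (block_of z)" using b by simp
    moreover from this have "b \<in> verts Sk" using wf_skeleton by (auto simp: wf_graph_def)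
    ultimately show ?thesis using b(1) graph_dist_adj_le_1[OF _ z_vert] by blast
  qed
qed

lemma skeleton_dist_blocks_le_1:
  assumes "z \<in> verts G" "z' \<in> verts G" "dist G z z' \<le> enat M"
  shows "dist Sk (block_of z) (block_of z') \<le> 1"
proof -
  have "block_of z \<in> verts Sk" "block_of z' \<in> verts Sk"
    using assms(1,2) is_block_block_of by (auto simp: skeleton_verts)
  then show ?thesis
    using close_vertices_in_adjacent_blocks[OF assms] graph_dist_refl[of "block_of z" Sk]
      graph_dist_adj_le_1[of "block_of z" Sk "block_of z'"]
    by auto
qed

lemma M_disjoint_lift:
  assumes "M_disjoint Sk 3 S T" shows "M_disjoint G M (lift S) (lift T)"
  unfolding M_disjoint_def
proof (intro ballI)
  fix z z' assume z: "z \<in> lift S" "z' \<in> lift T"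
  obtain b b' where b: "b \<in> S" "dist Sk b (block_of z) \<le> 1"
    and b': "b' \<in> T" "dist Sk b' (block_of z') \<le> 1"
    using halo_near[of z S] halo_near[of z' T] z subsetD[OF lift_subset_halo] by metis
  show "enat M < dist G z z'"
  proof (rule ccontr)
    assume "\<not> ?thesis"
    then have mid: "dist Sk (block_of z) (block_of z') \<le> 1"
      using skeleton_dist_blocks_le_1 z subsetD[OF lift_subset_verts] by simp
    have "dist Sk b b' \<le> dist Sk b (block_of z) + dist Sk (block_of z) b'"
      by (rule graph_dist_triangle)
    also have "\<dots> \<le> dist Sk b (block_of z) +
        (dist Sk (block_of z) (block_of z') + dist Sk (block_of z') b')"
      by (intro add_left_mono graph_dist_triangle)
    also have "\<dots> \<le> 1 + (1 + 1)"
      using b(2) mid b'(2) graph_dist_sym[OF wf_skeleton, of b'] by (intro add_mono) auto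
    also have "(1 + (1 + 1) :: enat) = 3" by simp
    finally have "dist Sk b b' \<le> 3" .
    moreover have "enat 3 < dist Sk b b'" using assms b(1) b'(1) unfolding M_disjoint_def by simp
    ultimately show False by (simp add: numeral_eq_enat)
  qed
qed

theorem skeleton_fat_minor_imp_fat_minor:
  assumes "fat_minor 3 H Sk" shows "fat_minor M H G"
proof -
  obtain VH EH ends where H: "H = (VH, EH, ends)" by (cases H)
  from assms obtain B P where
    B: "\<forall>v\<in>VH. conn_sub Sk (B v)" and
    P: "\<forall>e\<in>EH. gpath Sk (P e) \<and> hd (P e) \<in> B (fst (ends e)) \<and> last (P e) \<in> B (snd (ends e))" and
    BB: "\<forall>u\<in>VH. \<forall>v\<in>VH. u \<noteq> v \<longrightarrow> M_disjoint Sk 3 (B u) (B v)" and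
    PP: "\<forall>e\<in>EH. \<forall>f\<in>EH. e \<noteq> f \<longrightarrow> M_disjoint Sk 3 (set (P e)) (set (P f))" and
    BP: "\<forall>v\<in>VH. \<forall>e\<in>EH. v \<noteq> fst (ends e) \<and> v \<noteq> snd (ends e) \<longrightarrow>
           M_disjoint Sk 3 (B v) (set (P e))"
    unfolding fat_minor_def H prod.case by blast
  have "\<forall>e\<in>EH. \<exists>p. gpath G p \<and> hd p \<in> lift (B (fst (ends e))) \<and>
      last p \<in> lift (B (snd (ends e))) \<and> set p \<subseteq> lift (set (P e))"
    using P gpath_lift by blast
  from bchoice[OF this] obtain P' where P':
    "\<forall>e\<in>EH. gpath G (P' e) \<and> hd (P' e) \<in> lift (B (fst (ends e))) \<and>
       last (P' e) \<in> lift (B (snd (ends e))) \<and> set (P' e) \<subseteq> lift (set (P e))"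
    by blast
  show ?thesis unfolding fat_minor_def H prod.case
  proof (intro exI[of _ "\<lambda>v. lift (B v)"] exI[of _ P'] conjI ballI impI)
    fix e f assume "e \<in> EH" "f \<in> EH" "e \<noteq> f"
    then show "M_disjoint G M (set (P' e)) (set (P' f))"
      using PP M_disjoint_lift P' M_disjoint_mono by meson
  next
    fix v e assume "v \<in> VH" "e \<in> EH" "v \<noteq> fst (ends e) \<and> v \<noteq> snd (ends e)"
    then show "M_disjoint G M (lift (B v)) (set (P' e))"
      using BP M_disjoint_lift P' M_disjoint_mono by (meson order_refl)
  qed (use B P' BB conn_sub_lift M_disjoint_lift in auto)
qed

end

theorem theorem4:
  fixes G :: "'a sgraph" and H :: "('v,'e) mgraph" and M :: nat and x0 :: 'a
  assumes "wf_graph G" and "connected_graph G" and "unbounded_graph G"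
    and "coarsely_bottlenecked G"
    and "wf_mgraph H"
    and "\<not> asymptotic_minor H G"
    and "M \<ge> 1"
    and "\<not> fat_minor M H G"
    and "x0 \<in> verts G"
  shows "\<not> fat_minor 3 H (skeleton G x0 (real M) M)"
proof -
  interpret rooted_graph G x0 M using assms(1,2,7,9) by unfold_locales
  show ?thesis using skeleton_fat_minor_imp_fat_minor assms(8) by blast
qed

end
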